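(* For all contexts $\Gamma,\Delta$, terms $M,A$ and substitution $\sigma$: if $\sigma:\Gamma\rightharpoonup\Delta$, $\Delta\ \mathrm{ok}$ and $\Gamma\vdash M:A$, then $\Delta\vdash M\bullet\sigma:A\bullet\sigma$.
   Context: Let $\mathcal V$ (the variables) be a type with decidable equality, equipped with functions $\mathrm{encode}:\mathcal V\to\mathbb N$ and $\mathrm{decode}:\mathbb N\to\mathcal V$ such that $\mathrm{encode}(\mathrm{decode}\,n)=n$ for all $n$. Let $\mathcal C$ (the constants) be any type. Terms $\Lambda$ are generated by: $c\,k$ ($k\in\mathcal C$), $v\,x$ ($x\in\mathcal V$), $\lambda[x:A]M$, $\Pi[x:A]B$ and $M\cdot N$; in $\lambda[x:A]M$ and $\Pi[x:A]B$ the name $x$ binds in $M$ (resp. $B$) but not in $A$. Terms are raw first-order syntax (not identified up to renaming of bound variables) and $\equiv$ denotes syntactic identity. The list of free variables is $\mathrm{fv}(c\,k)=[\,]$, $\mathrm{fv}(v\,x)=[x]$, $\mathrm{fv}(\lambda[x:A]M)=\mathrm{fv}\,A\mathbin{+\!\!+}(\mathrm{fv}\,M-x)$, $\mathrm{fv}(\Pi[x:A]B)=\mathrm{fv}\,A\mathbin{+\!\!+}(\mathrm{fv}\,B-x)$, $\mathrm{fv}(M\cdot N)=\mathrm{fv}\,M\mathbin{+\!\!+}\mathrm{fv}\,N$, where $\mathbin{+\!\!+}$ is list concatenation and $xs-x$ deletes every occurrence of $x$ from $xs$. Fix a function $\chi':\mathrm{List}\,\mathbb N\to\mathbb N$ with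 $\chi'(ns)\notin ns$ for every list $ns$, and put $X'(xs)=\mathrm{decode}(\chi'(\mathrm{map}\ \mathrm{encode}\ xs))$. A substitution is any function $\sigma:\mathcal V\to\Lambda$; $\iota=v$ is the identity substitution; $(\sigma,x:=N)(y)=N$ if $y=x$ and $\sigma\,y$ otherwise. For a substitution $\sigma$ and a list $xs$ of variables, $X(\sigma,xs)=X'(\text{concatenation of the lists }\mathrm{fv}(\sigma\,y)\text{ for }y\in xs)$. The action $M\bullet\sigma$ is defined by structural recursion: $c\,k\bullet\sigma=c\,k$; $v\,x\bullet\sigma=\sigma\,x$; $(M\cdot N)\bullet\sigma=(M\bullet\sigma)\cdot(N\bullet\sigma)$; $(\lambda[x:A]M)\bullet\sigma=\lambda[y:A\bullet\sigma](M\bullet(\sigma,x:=v\,y))$ with $y=X(\sigma,\mathrm{fv}\,M-x)$; $(\Pi[x:A]B)\bullet\sigma=\Pi[y:A\bullet\sigma](B\bullet(\sigma,x:=v\,y))$ with $y=X(\sigma,\mathrm{fv}\,B-x)$. Unary substitution is $M[x:=N]=M\bullet(\iota,x:=N)$. $\alpha$-conversion $\sim_\alpha$ is the inductively defined relation with rules: $c\,k\sim_\alpha c\,k$; $v\,x\sim_\alpha v\,x$; $M\cdot N\sim_\alpha M'\cdot N'$ if $M\sim_\alpha M'$ and $N\sim_\alpha N'$; $\lambda[x:A]M\sim_\alpha\lambda[x':A']M'$ if $A\sim_\alpha A'$ and there is a variable $y$ with $y\notin\mathrm{fv}\,M-x$, $y\notin\mathrm{fv}\,M'-x'$ and $M[x:=v\,y]\equiv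 M'[x':=v\,y]$; and the same rule with $\Pi$ in place of $\lambda$. $\beta$-contraction is $(\lambda[x:A]M)\cdot N\ \triangleright_\beta\ M[x:=N]$. One-step $\beta$-reduction $\to_\beta$ is its contextual closure, inductively: $M\to_\beta N$ if $M\triangleright_\beta N$; $\lambda[x:A]M\to_\beta\lambda[x:A]M'$ and $\Pi[x:A]M\to_\beta\Pi[x:A]M'$ if $M\to_\beta M'$; $\lambda[x:A]M\to_\beta\lambda[x:A']M$ and $\Pi[x:A]M\to_\beta\Pi[x:A']M$ if $A\to_\beta A'$; $M\cdot P\to_\beta N\cdot P$ and $P\cdot M\to_\beta P\cdot N$ if $M\to_\beta N$. $\beta$-conversion $\simeq_\beta$ is the equivalence (reflexive–symmetric–transitive) closure of $\sim_\alpha\cup\to_\beta$. Pure Type System: fix a binary relation $\mathcal A\subseteq\mathcal C\times\mathcal C$ (axioms) and a ternary relation $\mathcal R\subseteq\mathcal C\times\mathcal C\times\mathcal C$ (rules). A context is a finite list of pairs $(x,A)$ with $x\in\mathcal V$, $A\in\Lambda$; $\Gamma,x:A$ denotes the list $(x,A)::\Gamma$; $\mathrm{dom}\,\Gamma$ is the list of first components; $(x,A)\in\Gamma$ is list membership. The judgments $\Gamma\ \mathrm{ok}$ and $\Gamma\vdash M:A$ are defined mutually inductively by: (nil) $[\,]\ \mathrm{ok}$; (cons) if $\Gamma\ \mathrm{ok}$, $\Gamma\vdash A:c\,s$ and $x\notin\mathrm{dom}\,\Gamma$ then $\Gamma,x:A\ \mathrm{ok}$; (sort) if $\Gamma\ \mathrm{ok}$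 and $\mathcal A\,s_1\,s_2$ then $\Gamma\vdash c\,s_1:c\,s_2$; (var) if $\Gamma\ \mathrm{ok}$ and $(x,A)\in\Gamma$ then $\Gamma\vdash v\,x:A$; (prod) if $\mathcal R\,s_1\,s_2\,s_3$, $\Gamma\vdash A:c\,s_1$ and for every $y\notin\mathrm{dom}\,\Gamma$, $\Gamma,y:A\vdash B[x:=v\,y]:c\,s_2$, then $\Gamma\vdash\Pi[x:A]B:c\,s_3$; (abs) if $\mathcal R\,s_1\,s_2\,s_3$, $\Gamma\vdash A:c\,s_1$, for every $z\notin\mathrm{dom}\,\Gamma$, $\Gamma,z:A\vdash B[y:=v\,z]:c\,s_2$, and for every $z\notin\mathrm{dom}\,\Gamma$, $\Gamma,z:A\vdash M[x:=v\,z]:B[y:=v\,z]$, then $\Gamma\vdash\lambda[x:A]M:\Pi[y:A]B$; (app) if $\Gamma\vdash M:\Pi[x:A]B$, $\Gamma\vdash N:A$ and $\Gamma\vdash B[x:=N]:c\,s$ for some $s$, then $\Gamma\vdash M\cdot N:B[x:=N]$; (conv) if $\Gamma\vdash M:A$, $A\simeq_\beta B$ and $\Gamma\vdash B:c\,s$ for some $s$, then $\Gamma\vdash M:B$. (The premises quantified over all fresh names in (prod) and (abs) are infinitely branching.) A substitution $\sigma$ is well-typed from $\Gamma$ to $\Delta$, written $\sigma:\Gamma\rightharpoonup\Delta$, if for every $(x,A)\in\Gamma$ we have $\Delta\vdash\sigma\,x:A\bullet\sigma$. *)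

theory Defs
  imports Main
begin

(* Raw first-order terms: constants of type 'c, variables of type 'v.
   Lam x A M  =  lambda[x:A]M,  Pi x A B = Pi[x:A]B,  App M N = M . N *)
datatype ('c, 'v) trm =
    Cst 'c
  | Var 'v
  | Lam 'v "('c, 'v) trm" "('c, 'v) trm"
  | Pi 'v "('c, 'v) trm" "('c, 'v) trm"
  | App "('c, 'v) trm" "('c, 'v) trm"

primrec fv :: "('c, 'v) trm \<Rightarrow> 'v list" where
  "fv (Cst k) = []"
| "fv (Var x) = [x]"
| "fv (Lam x A M) = fv A @ removeAll x (fv M)"
| "fv (Pi x A B) = fv A @ removeAll x (fv B)"
| "fv (App M N) = fv M @ fv N"

definition Xp :: "('v \<Rightarrow> nat) \<Rightarrow> (nat \<Rightarrow> 'v) \<Rightarrow> (nat list \<Rightarrow> nat) \<Rightarrow> 'v list \<Rightarrow> 'v" where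
  "Xp enc dec chi xs = dec (chi (map enc xs))"

definition Xs :: "('v \<Rightarrow> nat) \<Rightarrow> (nat \<Rightarrow> 'v) \<Rightarrow> (nat list \<Rightarrow> nat)
    \<Rightarrow> ('v \<Rightarrow> ('c, 'v) trm) \<Rightarrow> 'v list \<Rightarrow> 'v" where
  "Xs enc dec chi \<sigma> xs = Xp enc dec chi (concat (map (\<lambda>y. fv (\<sigma> y)) xs))"

primrec sbst :: "('v \<Rightarrow> nat) \<Rightarrow> (nat \<Rightarrow> 'v) \<Rightarrow> (nat list \<Rightarrow> nat)
    \<Rightarrow> ('c, 'v) trm \<Rightarrow> ('v \<Rightarrow> ('c, 'v) trm) \<Rightarrow> ('c, 'v) trm" where
  "sbst enc dec chi (Cst k) \<sigma> = Cst k"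
| "sbst enc dec chi (Var x) \<sigma> = \<sigma> x"
| "sbst enc dec chi (App M N) \<sigma> = App (sbst enc dec chi M \<sigma>) (sbst enc dec chi N \<sigma>)"
| "sbst enc dec chi (Lam x A M) \<sigma> =
     (let y = Xs enc dec chi \<sigma> (removeAll x (fv M))
      in Lam y (sbst enc dec chi A \<sigma>) (sbst enc dec chi M (\<sigma>(x := Var y))))"
| "sbst enc dec chi (Pi x A B) \<sigma> =
     (let y = Xs enc dec chi \<sigma> (removeAll x (fv B))
      in Pi y (sbst enc dec chi A \<sigma>) (sbst enc dec chi B (\<sigma>(x := Var y))))"

definition usubst :: "('v \<Rightarrow> nat) \<Rightarrow> (nat \<Rightarrow> 'v) \<Rightarrow> (nat list \<Rightarrow> nat)
    \<Rightarrow> ('c, 'v) trm \<Rightarrow> 'v \<Rightarrow> ('c, 'v) trm \<Rightarrow> ('c, 'v) trm" where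
  "usubst enc dec chi M x N = sbst enc dec chi M (Var(x := N))"

inductive alpha :: "('v \<Rightarrow> nat) \<Rightarrow> (nat \<Rightarrow> 'v) \<Rightarrow> (nat list \<Rightarrow> nat)
    \<Rightarrow> ('c, 'v) trm \<Rightarrow> ('c, 'v) trm \<Rightarrow> bool"
  for enc dec chi where
  a_cst: "alpha enc dec chi (Cst k) (Cst k)"
| a_var: "alpha enc dec chi (Var x) (Var x)"
| a_app: "alpha enc dec chi M M' \<Longrightarrow> alpha enc dec chi N N' \<Longrightarrow>
          alpha enc dec chi (App M N) (App M' N')"
| a_lam: "alpha enc dec chi A A' \<Longrightarrow> y \<notin> set (removeAll x (fv M)) \<Longrightarrow>
          y \<notin> set (removeAll x' (fv M')) \<Longrightarrow>
          usubst enc dec chi M x (Var y) = usubst enc dec chi M' x' (Var y) \<Longrightarrow>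
          alpha enc dec chi (Lam x A M) (Lam x' A' M')"
| a_pi: "alpha enc dec chi A A' \<Longrightarrow> y \<notin> set (removeAll x (fv M)) \<Longrightarrow>
          y \<notin> set (removeAll x' (fv M')) \<Longrightarrow>
          usubst enc dec chi M x (Var y) = usubst enc dec chi M' x' (Var y) \<Longrightarrow>
          alpha enc dec chi (Pi x A M) (Pi x' A' M')"

inductive beta :: "('v \<Rightarrow> nat) \<Rightarrow> (nat \<Rightarrow> 'v) \<Rightarrow> (nat list \<Rightarrow> nat)
    \<Rightarrow> ('c, 'v) trm \<Rightarrow> ('c, 'v) trm \<Rightarrow> bool"
  for enc dec chi where
  b_contr: "beta enc dec chi (App (Lam x A M) N) (usubst enc dec chi M x N)"
| b_lam_body: "beta enc dec chi M M' \<Longrightarrow> beta enc dec chi (Lam x A M) (Lam x A M')"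
| b_pi_body: "beta enc dec chi M M' \<Longrightarrow> beta enc dec chi (Pi x A M) (Pi x A M')"
| b_lam_dom: "beta enc dec chi A A' \<Longrightarrow> beta enc dec chi (Lam x A M) (Lam x A' M)"
| b_pi_dom: "beta enc dec chi A A' \<Longrightarrow> beta enc dec chi (Pi x A M) (Pi x A' M)"
| b_app_l: "beta enc dec chi M N \<Longrightarrow> beta enc dec chi (App M P) (App N P)"
| b_app_r: "beta enc dec chi M N \<Longrightarrow> beta enc dec chi (App P M) (App P N)"

inductive bconv :: "('v \<Rightarrow> nat) \<Rightarrow> (nat \<Rightarrow> 'v) \<Rightarrow> (nat list \<Rightarrow> nat)
    \<Rightarrow> ('c, 'v) trm \<Rightarrow> ('c, 'v) trm \<Rightarrow> bool"
  for enc dec chi where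
  c_alpha: "alpha enc dec chi M N \<Longrightarrow> bconv enc dec chi M N"
| c_beta: "beta enc dec chi M N \<Longrightarrow> bconv enc dec chi M N"
| c_refl: "bconv enc dec chi M M"
| c_sym: "bconv enc dec chi M N \<Longrightarrow> bconv enc dec chi N M"
| c_trans: "bconv enc dec chi M N \<Longrightarrow> bconv enc dec chi N P \<Longrightarrow> bconv enc dec chi M P"

type_synonym ('c, 'v) ctx = "('v \<times> ('c, 'v) trm) list"

(* Pure Type System with axioms ax and rules rl;
   ctx_ok ... \<Gamma> is "\<Gamma> ok", typ ... \<Gamma> M A is "\<Gamma> \<turnstile> M : A" *)
inductive ctx_ok :: "('v \<Rightarrow> nat) \<Rightarrow> (nat \<Rightarrow> 'v) \<Rightarrow> (nat list \<Rightarrow> nat)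
    \<Rightarrow> ('c \<Rightarrow> 'c \<Rightarrow> bool) \<Rightarrow> ('c \<Rightarrow> 'c \<Rightarrow> 'c \<Rightarrow> bool) \<Rightarrow> ('c, 'v) ctx \<Rightarrow> bool"
  and has_typ :: "('v \<Rightarrow> nat) \<Rightarrow> (nat \<Rightarrow> 'v) \<Rightarrow> (nat list \<Rightarrow> nat)
    \<Rightarrow> ('c \<Rightarrow> 'c \<Rightarrow> bool) \<Rightarrow> ('c \<Rightarrow> 'c \<Rightarrow> 'c \<Rightarrow> bool)
    \<Rightarrow> ('c, 'v) ctx \<Rightarrow> ('c, 'v) trm \<Rightarrow> ('c, 'v) trm \<Rightarrow> bool"
  for enc dec chi ax rl where
  t_nil: "ctx_ok enc dec chi ax rl []"
| t_cons: "ctx_ok enc dec chi ax rl \<Gamma> \<Longrightarrow> has_typ enc dec chi ax rl \<Gamma> A (Cst s) \<Longrightarrow>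
           x \<notin> set (map fst \<Gamma>) \<Longrightarrow> ctx_ok enc dec chi ax rl ((x, A) # \<Gamma>)"
| t_sort: "ctx_ok enc dec chi ax rl \<Gamma> \<Longrightarrow> ax s1 s2 \<Longrightarrow>
           has_typ enc dec chi ax rl \<Gamma> (Cst s1) (Cst s2)"
| t_var: "ctx_ok enc dec chi ax rl \<Gamma> \<Longrightarrow> (x, A) \<in> set \<Gamma> \<Longrightarrow>
           has_typ enc dec chi ax rl \<Gamma> (Var x) A"
| t_prod: "rl s1 s2 s3 \<Longrightarrow> has_typ enc dec chi ax rl \<Gamma> A (Cst s1) \<Longrightarrow>
           (\<forall>y. y \<notin> set (map fst \<Gamma>) \<longrightarrow>
              has_typ enc dec chi ax rl ((y, A) # \<Gamma>) (usubst enc dec chi B x (Var y)) (Cst s2)) \<Longrightarrow>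
           has_typ enc dec chi ax rl \<Gamma> (Pi x A B) (Cst s3)"
| t_abs: "rl s1 s2 s3 \<Longrightarrow> has_typ enc dec chi ax rl \<Gamma> A (Cst s1) \<Longrightarrow>
           (\<forall>z. z \<notin> set (map fst \<Gamma>) \<longrightarrow>
              has_typ enc dec chi ax rl ((z, A) # \<Gamma>) (usubst enc dec chi B y (Var z)) (Cst s2)) \<Longrightarrow>
           (\<forall>z. z \<notin> set (map fst \<Gamma>) \<longrightarrow>
              has_typ enc dec chi ax rl ((z, A) # \<Gamma>) (usubst enc dec chi M x (Var z))
                 (usubst enc dec chi B y (Var z))) \<Longrightarrow>
           has_typ enc dec chi ax rl \<Gamma> (Lam x A M) (Pi y A B)"
| t_app: "has_typ enc dec chi ax rl \<Gamma> M (Pi x A B) \<Longrightarrow> has_typ enc dec chi ax rl \<Gamma> N A \<Longrightarrow>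
           has_typ enc dec chi ax rl \<Gamma> (usubst enc dec chi B x N) (Cst s) \<Longrightarrow>
           has_typ enc dec chi ax rl \<Gamma> (App M N) (usubst enc dec chi B x N)"
| t_conv: "has_typ enc dec chi ax rl \<Gamma> M A \<Longrightarrow> bconv enc dec chi A B \<Longrightarrow>
           has_typ enc dec chi ax rl \<Gamma> B (Cst s) \<Longrightarrow> has_typ enc dec chi ax rl \<Gamma> M B"

definition wt_subst :: "('v \<Rightarrow> nat) \<Rightarrow> (nat \<Rightarrow> 'v) \<Rightarrow> (nat list \<Rightarrow> nat)
    \<Rightarrow> ('c \<Rightarrow> 'c \<Rightarrow> bool) \<Rightarrow> ('c \<Rightarrow> 'c \<Rightarrow> 'c \<Rightarrow> bool)
    \<Rightarrow> ('v \<Rightarrow> ('c, 'v) trm) \<Rightarrow> ('c, 'v) ctx \<Rightarrow> ('c, 'v) ctx \<Rightarrow> bool" where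
  "wt_subst enc dec chi ax rl \<sigma> \<Gamma> \<Delta> \<longleftrightarrow>
     (\<forall>x A. (x, A) \<in> set \<Gamma> \<longrightarrow> has_typ enc dec chi ax rl \<Delta> (\<sigma> x) (sbst enc dec chi A \<sigma>))"

end

theory Submission
  imports Defs
begin

text \<open>The action \<bullet> avoids
capture by renaming every binder to the name X chooses from the free variables of the
substituted terms; this makes the composition law (M \<bullet> \<sigma>) \<bullet> \<tau> = M \<bullet> (\<sigma> ; \<tau>) hold exactly.
The price is that the bodies of M \<bullet> \<sigma> are not the instances the typing rules speak about:
they differ by the renaming N \<mapsto> N \<bullet> \<iota>, which is an \<alpha>-conversion. So the proof needs
invariance of typing under \<alpha>-conversion of the subject (which in turn needs conversion of
the context), and, for the conversion rule, stability of \<beta>-conversion under substitution.\<close>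

section \<open>Fresh names and simultaneous substitution\<close>

locale naming =
  fixes enc :: "'v \<Rightarrow> nat" and dec :: "nat \<Rightarrow> 'v" and chi :: "nat list \<Rightarrow> nat"
  assumes enc_dec: "\<And>n. enc (dec n) = n"
    and chi_fresh: "\<And>ns. chi ns \<notin> set ns"
begin

abbreviation sbst_syntax :: "('c, 'v) trm \<Rightarrow> ('v \<Rightarrow> ('c, 'v) trm) \<Rightarrow> ('c, 'v) trm"
    (infixl "\<bullet>" 75) where
  "M \<bullet> \<sigma> \<equiv> sbst enc dec chi M \<sigma>"

abbreviation usubst_syntax :: "('c, 'v) trm \<Rightarrow> 'v \<Rightarrow> ('c, 'v) trm \<Rightarrow> ('c, 'v) trm"
    ("_[_ ::= _]" [1000, 0, 0] 1000) where
  "M[x ::= N] \<equiv> usubst enc dec chi M x N"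

abbreviation X :: "('v \<Rightarrow> ('c, 'v) trm) \<Rightarrow> 'v list \<Rightarrow> 'v" where
  "X \<equiv> Xs enc dec chi"

lemma infinite_vars: "infinite (UNIV :: 'v set)"
proof
  assume "finite (UNIV :: 'v set)"
  then have "finite (range enc)" by simp
  moreover have "range enc = (UNIV :: nat set)" by (metis enc_dec surj_def)
  ultimately show False by simp
qed

lemma ex_fresh: "\<exists>v :: 'v. v \<notin> A" if "finite A"
  using ex_new_if_finite[OF infinite_vars that] by blast

lemma X_fresh: "w \<in> set L \<Longrightarrow> X \<sigma> L \<notin> set (fv (\<sigma> w))"
proof
  let ?xs = "concat (map (\<lambda>w. fv (\<sigma> w)) L)"
  assume "w \<in> set L" and "X \<sigma> L \<in> set (fv (\<sigma> w))"
  then have "enc (dec (chi (map enc ?xs))) \<in> set (map enc ?xs)"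
    unfolding Xs_def Xp_def by auto
  then show False using chi_fresh[of "map enc ?xs"] by (simp add: enc_dec)
qed

lemma X_cong: "(\<And>w. w \<in> set L \<Longrightarrow> fv (\<sigma> w) = fv (\<tau> w)) \<Longrightarrow> X \<sigma> L = X \<tau> L"
  unfolding Xs_def by (metis (mono_tags, lifting) map_cong)

definition fresh_binder :: "('v \<Rightarrow> ('c, 'v) trm) \<Rightarrow> 'v \<Rightarrow> ('c, 'v) trm \<Rightarrow> 'v \<Rightarrow> bool" where
  "fresh_binder \<sigma> x M u \<longleftrightarrow> (\<forall>w \<in> set (fv M). w \<noteq> x \<longrightarrow> u \<notin> set (fv (\<sigma> w)))"

lemma fresh_binder_X: "fresh_binder \<sigma> x M (X \<sigma> (removeAll x (fv M)))"
  unfolding fresh_binder_def using X_fresh[of _ "removeAll x (fv M)" \<sigma>] by simp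

lemma fresh_binder_mono:
  "fresh_binder \<sigma> x M u \<Longrightarrow> set (fv M') \<subseteq> set (fv M) \<Longrightarrow> fresh_binder \<sigma> x M' u"
  unfolding fresh_binder_def by blast

lemma sbst_cong: "\<forall>w \<in> set (fv M). \<sigma> w = \<tau> w \<Longrightarrow> M \<bullet> \<sigma> = M \<bullet> \<tau>"
proof (induction M arbitrary: \<sigma> \<tau>)
  case (Lam x A M)
  then have "X \<tau> (removeAll x (fv M)) = X \<sigma> (removeAll x (fv M))"
    by (intro X_cong) auto
  with Lam show ?case by (simp add: Let_def)
next
  case (Pi x A M)
  then have "X \<tau> (removeAll x (fv M)) = X \<sigma> (removeAll x (fv M))"
    by (intro X_cong) auto
  with Pi show ?case by (simp add: Let_def)
qed auto

lemma removeAll_concat_map_upd: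
  "fresh_binder \<sigma> x M y \<Longrightarrow> set L \<subseteq> set (fv M) \<Longrightarrow>
   removeAll y (concat (map (\<lambda>w. fv (if w = x then Var y else \<sigma> w)) L))
     = concat (map (\<lambda>w. fv (\<sigma> w)) (removeAll x L))"
  by (induction L) (auto simp: fresh_binder_def)

lemma fv_sbst: "fv (M \<bullet> \<sigma>) = concat (map (\<lambda>w. fv (\<sigma> w)) (fv M))"
proof (induction M arbitrary: \<sigma>)
  case (Lam x A M)
  show ?case
    using Lam removeAll_concat_map_upd[OF fresh_binder_X order_refl, of \<sigma> x M]
    by (simp add: Let_def)
next
  case (Pi x A M)
  show ?case
    using Pi removeAll_concat_map_upd[OF fresh_binder_X order_refl, of \<sigma> x M]
    by (simp add: Let_def)
qed simp_all

definition scomp :: "('v \<Rightarrow> ('c, 'v) trm) \<Rightarrow> ('v \<Rightarrow> ('c, 'v) trm) \<Rightarrow> 'v \<Rightarrow> ('c, 'v) trm" where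
  "scomp \<sigma> \<tau> = (\<lambda>w. \<sigma> w \<bullet> \<tau>)"

lemma removeAll_fv_sbst_upd:
  "fresh_binder \<sigma> x M y \<Longrightarrow>
   removeAll y (fv (M \<bullet> \<sigma>(x := Var y))) = concat (map (\<lambda>w. fv (\<sigma> w)) (removeAll x (fv M)))"
  by (simp add: fv_sbst removeAll_concat_map_upd)

lemma X_concat_fv: "X \<tau> (concat (map (\<lambda>w. fv (\<sigma> w)) L)) = X (scomp \<sigma> \<tau>) L"
proof -
  have "concat (map (\<lambda>v. fv (\<tau> v)) (concat (map (\<lambda>w. fv (\<sigma> w)) L)))
      = concat (map (\<lambda>w. fv (scomp \<sigma> \<tau> w)) L)"
    by (induction L) (simp_all add: scomp_def fv_sbst)
  then show ?thesis by (simp add: Xs_def)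
qed

lemma sbst_scomp_upd:
  assumes "fresh_binder \<sigma> x M y"
  shows "M \<bullet> scomp (\<sigma>(x := Var y)) (\<tau>(y := N)) = M \<bullet> (scomp \<sigma> \<tau>)(x := N)"
proof (rule sbst_cong, intro ballI)
  fix w assume w: "w \<in> set (fv M)"
  show "scomp (\<sigma>(x := Var y)) (\<tau>(y := N)) w = ((scomp \<sigma> \<tau>)(x := N)) w"
  proof (cases "w = x")
    case False
    with w assms have "y \<notin> set (fv (\<sigma> w))" by (simp add: fresh_binder_def)
    then have "\<sigma> w \<bullet> \<tau>(y := N) = \<sigma> w \<bullet> \<tau>" by (intro sbst_cong) auto
    with False show ?thesis by (simp add: scomp_def)
  qed (simp add: scomp_def)
qed

lemma sbst_sbst: "M \<bullet> \<sigma> \<bullet> \<tau> = M \<bullet> scomp \<sigma> \<tau>"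
proof (induction M arbitrary: \<sigma> \<tau>)
  case (Lam x A M)
  define y where "y = X \<sigma> (removeAll x (fv M))"
  have fresh: "fresh_binder \<sigma> x M y" unfolding y_def by (rule fresh_binder_X)
  then have X_eq: "X \<tau> (removeAll y (fv (M \<bullet> \<sigma>(x := Var y)))) = X (scomp \<sigma> \<tau>) (removeAll x (fv M))"
    by (simp add: removeAll_fv_sbst_upd X_concat_fv)
  show ?case
    unfolding sbst.simps Let_def y_def[symmetric] X_eq Lam.IH sbst_scomp_upd[OF fresh] ..
next
  case (Pi x A M)
  define y where "y = X \<sigma> (removeAll x (fv M))"
  have fresh: "fresh_binder \<sigma> x M y" unfolding y_def by (rule fresh_binder_X)
  then have X_eq: "X \<tau> (removeAll y (fv (M \<bullet> \<sigma>(x := Var y)))) = X (scomp \<sigma> \<tau>) (removeAll x (fv M))"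
    by (simp add: removeAll_fv_sbst_upd X_concat_fv)
  show ?case
    unfolding sbst.simps Let_def y_def[symmetric] X_eq Pi.IH sbst_scomp_upd[OF fresh] ..
qed (simp_all add: scomp_def)

lemma sbst_usubst: "M[x ::= N] \<bullet> \<sigma> = M \<bullet> \<sigma>(x := N \<bullet> \<sigma>)"
  unfolding usubst_def sbst_sbst by (rule sbst_cong) (simp add: scomp_def)

lemma usubst_Var_sbst:
  "w \<notin> set (removeAll x (fv M)) \<Longrightarrow> M[x ::= Var w] \<bullet> \<sigma>(w := N) = M \<bullet> \<sigma>(x := N)"
  unfolding usubst_def sbst_sbst by (rule sbst_cong) (auto simp: scomp_def)

lemma sbst_upd_usubst:
  "fresh_binder \<sigma> x M u \<Longrightarrow> (M \<bullet> \<sigma>(x := Var u))[u ::= P] = M \<bullet> (scomp \<sigma> Var)(x := P)"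
  unfolding usubst_def sbst_sbst by (rule sbst_scomp_upd)

lemma sbst_upd_rename:
  "fresh_binder \<sigma> x M u \<Longrightarrow> (M \<bullet> \<sigma>(x := Var u))[u ::= Var z] = M \<bullet> \<sigma>(x := Var z) \<bullet> Var"
  unfolding sbst_upd_usubst sbst_sbst by (rule sbst_cong) (simp add: scomp_def)

lemma scomp_Var_left: "scomp Var \<tau> = \<tau>"
  by (simp add: scomp_def fun_eq_iff)

section \<open>\<alpha>-conversion\<close>

abbreviation alpha_syntax :: "('c, 'v) trm \<Rightarrow> ('c, 'v) trm \<Rightarrow> bool" (infix "=\<^sub>\<alpha>" 50) where
  "M =\<^sub>\<alpha> N \<equiv> alpha enc dec chi M N"

lemma fv_usubst_Var: "fv (M[x ::= Var v]) = map (\<lambda>w. if w = x then v else w) (fv M)"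
proof -
  have "concat (map (\<lambda>w. fv ((Var(x := Var v)) w)) L) = map (\<lambda>w. if w = x then v else w) L" for L
    by (induction L) auto
  then show ?thesis by (simp only: usubst_def fv_sbst)
qed

lemma usubst_Var_removeAll:
  assumes "M[x ::= Var v] = M'[x' ::= Var v]"
    and "v \<notin> set (removeAll x (fv M))" and "v \<notin> set (removeAll x' (fv M'))"
  shows "removeAll x (fv M) = removeAll x' (fv M')"
proof -
  have rename: "removeAll v (map (\<lambda>w. if w = y then v else w) L) = removeAll y L"
    if "v \<notin> set (removeAll y L)" for y L
    using that by (induction L) auto
  show ?thesis
    using arg_cong[OF assms(1), of "\<lambda>M. removeAll v (fv M)"] rename assms(2,3)
    by (simp add: fv_usubst_Var)
qed

lemma usubst_Var_sbst_eq:
  assumes "M[x ::= Var v] = M'[x' ::= Var v]"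
    and "v \<notin> set (removeAll x (fv M))" and "v \<notin> set (removeAll x' (fv M'))"
  shows "M \<bullet> \<sigma>(x := N) = M' \<bullet> \<sigma>(x' := N)"
  using usubst_Var_sbst[OF assms(2), of \<sigma> N] usubst_Var_sbst[OF assms(3), of \<sigma> N] assms(1)
  by simp

text \<open>The binder of M \<bullet> \<sigma> depends on the free variables of M only, which \<alpha>-equivalent
terms share.\<close>

lemma alpha_sbst: "M =\<^sub>\<alpha> N \<Longrightarrow> M \<bullet> \<sigma> = N \<bullet> \<sigma>"
proof (induction arbitrary: \<sigma> rule: alpha.induct)
  case (a_lam A A' y x M x' M')
  then show ?case
    using usubst_Var_removeAll[OF a_lam.hyps(4,2,3)] usubst_Var_sbst_eq[OF a_lam.hyps(4,2,3)]
    by (simp add: Let_def)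
next
  case (a_pi A A' y x M x' M')
  then show ?case
    using usubst_Var_removeAll[OF a_pi.hyps(4,2,3)] usubst_Var_sbst_eq[OF a_pi.hyps(4,2,3)]
    by (simp add: Let_def)
qed simp_all

lemma alpha_LamI:
  assumes "A =\<^sub>\<alpha> A'" and "\<And>v. M[x ::= Var v] = M'[x' ::= Var v]"
  shows "Lam x A M =\<^sub>\<alpha> Lam x' A' M'"
proof -
  obtain v where "v \<notin> set (removeAll x (fv M)) \<union> set (removeAll x' (fv M'))"
    using ex_fresh by blast
  then show ?thesis using alpha.a_lam[OF assms(1) _ _ assms(2)] by blast
qed

lemma alpha_PiI:
  assumes "A =\<^sub>\<alpha> A'" and "\<And>v. M[x ::= Var v] = M'[x' ::= Var v]"
  shows "Pi x A M =\<^sub>\<alpha> Pi x' A' M'"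
proof -
  obtain v where "v \<notin> set (removeAll x (fv M)) \<union> set (removeAll x' (fv M'))"
    using ex_fresh by blast
  then show ?thesis using alpha.a_pi[OF assms(1) _ _ assms(2)] by blast
qed

lemma alpha_refl: "M =\<^sub>\<alpha> M"
  by (induction M) (auto intro: alpha.intros alpha_LamI alpha_PiI)

lemma alpha_sym: "M =\<^sub>\<alpha> N \<Longrightarrow> N =\<^sub>\<alpha> M"
  by (induction rule: alpha.induct) (auto intro: alpha.intros)

lemma alpha_fv: "M =\<^sub>\<alpha> N \<Longrightarrow> fv M = fv N"
proof (induction rule: alpha.induct)
  case (a_lam A A' y x M x' M')
  then show ?case using usubst_Var_removeAll[OF a_lam.hyps(4,2,3)] by simp
next
  case (a_pi A A' y x M x' M')
  then show ?case using usubst_Var_removeAll[OF a_pi.hyps(4,2,3)] by simp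
qed simp_all

lemma alpha_sbst_Var:
  fixes M :: "('c, 'v) trm"
  shows "M =\<^sub>\<alpha> M \<bullet> Var"
proof (induction M)
  case (Lam x A M)
  let ?u = "X (Var :: 'v \<Rightarrow> ('c, 'v) trm) (removeAll x (fv M))"
  have "M[x ::= Var v] = (M \<bullet> Var(x := Var ?u))[?u ::= Var v]" for v
    using sbst_upd_usubst[OF fresh_binder_X[of Var x M], where P = "Var v"]
    by (simp add: scomp_Var_left usubst_def)
  with Lam.IH show ?case by (simp add: Let_def alpha_LamI)
next
  case (Pi x A M)
  let ?u = "X (Var :: 'v \<Rightarrow> ('c, 'v) trm) (removeAll x (fv M))"
  have "M[x ::= Var v] = (M \<bullet> Var(x := Var ?u))[?u ::= Var v]" for v
    using sbst_upd_usubst[OF fresh_binder_X[of Var x M], where P = "Var v"]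
    by (simp add: scomp_Var_left usubst_def)
  with Pi.IH show ?case by (simp add: Let_def alpha_PiI)
qed (auto intro: alpha.intros)

lemma alpha_sbst_cong: "\<forall>w \<in> set (fv M). \<sigma> w =\<^sub>\<alpha> \<tau> w \<Longrightarrow> M \<bullet> \<sigma> =\<^sub>\<alpha> M \<bullet> \<tau>"
proof (induction M arbitrary: \<sigma> \<tau>)
  case (Lam x A M)
  define u where "u = X \<sigma> (removeAll x (fv M))"
  have u_eq: "X \<tau> (removeAll x (fv M)) = u"
    unfolding u_def using Lam.prems by (intro X_cong) (force dest: alpha_fv)
  have "(M \<bullet> \<sigma>(x := Var u))[u ::= Var v] = (M \<bullet> \<tau>(x := Var u))[u ::= Var v]" for v
  proof -
    have "M \<bullet> (scomp \<sigma> Var)(x := Var v) = M \<bullet> (scomp \<tau> Var)(x := Var v)"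
      using Lam.prems by (intro sbst_cong) (auto simp: scomp_def alpha_sbst)
    then show ?thesis
      using fresh_binder_X[of \<sigma> x M] fresh_binder_X[of \<tau> x M]
      by (simp add: sbst_upd_usubst u_def u_eq)
  qed
  with Lam show ?case by (simp add: Let_def u_def[symmetric] u_eq alpha_LamI)
next
  case (Pi x A M)
  define u where "u = X \<sigma> (removeAll x (fv M))"
  have u_eq: "X \<tau> (removeAll x (fv M)) = u"
    unfolding u_def using Pi.prems by (intro X_cong) (force dest: alpha_fv)
  have "(M \<bullet> \<sigma>(x := Var u))[u ::= Var v] = (M \<bullet> \<tau>(x := Var u))[u ::= Var v]" for v
  proof -
    have "M \<bullet> (scomp \<sigma> Var)(x := Var v) = M \<bullet> (scomp \<tau> Var)(x := Var v)"
      using Pi.prems by (intro sbst_cong) (auto simp: scomp_def alpha_sbst)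
    then show ?thesis
      using fresh_binder_X[of \<sigma> x M] fresh_binder_X[of \<tau> x M]
      by (simp add: sbst_upd_usubst u_def u_eq)
  qed
  with Pi show ?case by (simp add: Let_def u_def[symmetric] u_eq alpha_PiI)
qed (auto intro: alpha.intros)

lemma alpha_sbst_scomp_Var: "M \<bullet> (scomp \<sigma> Var)(x := N) =\<^sub>\<alpha> M \<bullet> \<sigma>(x := N)"
  by (rule alpha_sbst_cong) (auto simp: scomp_def alpha_refl intro: alpha_sym alpha_sbst_Var)

lemma alpha_Lam_rename:
  "fresh_binder \<sigma> x M u \<Longrightarrow> fresh_binder \<sigma> x M u' \<Longrightarrow>
   Lam u C (M \<bullet> \<sigma>(x := Var u)) =\<^sub>\<alpha> Lam u' C (M \<bullet> \<sigma>(x := Var u'))"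
  by (rule alpha_LamI[OF alpha_refl]) (simp add: sbst_upd_rename)

lemma alpha_Pi_rename:
  "fresh_binder \<sigma> x M u \<Longrightarrow> fresh_binder \<sigma> x M u' \<Longrightarrow>
   Pi u C (M \<bullet> \<sigma>(x := Var u)) =\<^sub>\<alpha> Pi u' C (M \<bullet> \<sigma>(x := Var u'))"
  by (rule alpha_PiI[OF alpha_refl]) (simp add: sbst_upd_rename)

section \<open>\<beta>-conversion\<close>

abbreviation beta_syntax :: "('c, 'v) trm \<Rightarrow> ('c, 'v) trm \<Rightarrow> bool" (infix "\<rightarrow>\<^sub>\<beta>" 50) where
  "M \<rightarrow>\<^sub>\<beta> N \<equiv> beta enc dec chi M N"

abbreviation bconv_syntax :: "('c, 'v) trm \<Rightarrow> ('c, 'v) trm \<Rightarrow> bool" (infix "=\<^sub>\<beta>" 50) where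
  "M =\<^sub>\<beta> N \<equiv> bconv enc dec chi M N"

lemmas bconv_trans[trans] = bconv.c_trans[of enc dec chi]

lemma fv_usubst: "set (fv (M[x ::= N])) \<subseteq> set (removeAll x (fv M)) \<union> set (fv N)"
  unfolding usubst_def fv_sbst by (auto split: if_splits)

lemma beta_fv: "M \<rightarrow>\<^sub>\<beta> N \<Longrightarrow> set (fv N) \<subseteq> set (fv M)"
  by (induction rule: beta.induct) (use fv_usubst in auto)

lemma bconv_cong:
  assumes "\<And>P P'. P =\<^sub>\<alpha> P' \<Longrightarrow> f P =\<^sub>\<alpha> f P'" and "\<And>P P'. P \<rightarrow>\<^sub>\<beta> P' \<Longrightarrow> f P \<rightarrow>\<^sub>\<beta> f P'"
  shows "P =\<^sub>\<beta> P' \<Longrightarrow> f P =\<^sub>\<beta> f P'"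
  by (induction rule: bconv.induct) (auto intro: bconv.intros assms)

lemma alpha_usubst_Var: "M =\<^sub>\<alpha> M' \<Longrightarrow> M[x ::= Var v] = M'[x ::= Var v]"
  unfolding usubst_def by (rule alpha_sbst)

lemma bconv_Lam: "A =\<^sub>\<beta> A' \<Longrightarrow> M =\<^sub>\<beta> M' \<Longrightarrow> Lam x A M =\<^sub>\<beta> Lam x A' M'"
proof -
  assume A: "A =\<^sub>\<beta> A'" and M: "M =\<^sub>\<beta> M'"
  have "Lam x A M =\<^sub>\<beta> Lam x A' M"
    by (rule bconv_cong[where f = "\<lambda>A. Lam x A M", OF _ _ A])
      (auto intro: alpha_LamI beta.b_lam_dom)
  also have "Lam x A' M =\<^sub>\<beta> Lam x A' M'"
    by (rule bconv_cong[where f = "Lam x A'", OF _ _ M])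
      (auto intro: alpha_LamI alpha_refl alpha_usubst_Var beta.b_lam_body)
  finally show ?thesis .
qed

lemma bconv_Pi: "A =\<^sub>\<beta> A' \<Longrightarrow> M =\<^sub>\<beta> M' \<Longrightarrow> Pi x A M =\<^sub>\<beta> Pi x A' M'"
proof -
  assume A: "A =\<^sub>\<beta> A'" and M: "M =\<^sub>\<beta> M'"
  have "Pi x A M =\<^sub>\<beta> Pi x A' M"
    by (rule bconv_cong[where f = "\<lambda>A. Pi x A M", OF _ _ A])
      (auto intro: alpha_PiI beta.b_pi_dom)
  also have "Pi x A' M =\<^sub>\<beta> Pi x A' M'"
    by (rule bconv_cong[where f = "Pi x A'", OF _ _ M])
      (auto intro: alpha_PiI alpha_refl alpha_usubst_Var beta.b_pi_body)
  finally show ?thesis .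
qed

lemma bconv_App: "M =\<^sub>\<beta> M' \<Longrightarrow> N =\<^sub>\<beta> N' \<Longrightarrow> App M N =\<^sub>\<beta> App M' N'"
proof -
  assume M: "M =\<^sub>\<beta> M'" and N: "N =\<^sub>\<beta> N'"
  have "App M N =\<^sub>\<beta> App M' N"
    by (rule bconv_cong[where f = "\<lambda>M. App M N", OF _ _ M])
      (auto intro: alpha.a_app alpha_refl beta.b_app_l)
  also have "App M' N =\<^sub>\<beta> App M' N'"
    by (rule bconv_cong[where f = "App M'", OF _ _ N])
      (auto intro: alpha.a_app alpha_refl beta.b_app_r)
  finally show ?thesis .
qed

lemma beta_sbst: "M \<rightarrow>\<^sub>\<beta> N \<Longrightarrow> M \<bullet> \<sigma> =\<^sub>\<beta> N \<bullet> \<sigma>"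
proof (induction arbitrary: \<sigma> rule: beta.induct)
  case (b_contr x A M N)
  define u where "u = X \<sigma> (removeAll x (fv M))"
  have "App (Lam x A M) N \<bullet> \<sigma> \<rightarrow>\<^sub>\<beta> (M \<bullet> \<sigma>(x := Var u))[u ::= N \<bullet> \<sigma>]"
    by (simp add: u_def Let_def beta.b_contr)
  also have "(M \<bullet> \<sigma>(x := Var u))[u ::= N \<bullet> \<sigma>] = M \<bullet> (scomp \<sigma> Var)(x := N \<bullet> \<sigma>)"
    unfolding u_def by (rule sbst_upd_usubst[OF fresh_binder_X])
  finally have "App (Lam x A M) N \<bullet> \<sigma> =\<^sub>\<beta> M \<bullet> (scomp \<sigma> Var)(x := N \<bullet> \<sigma>)"
    by (rule bconv.c_beta)
  also have "M \<bullet> (scomp \<sigma> Var)(x := N \<bullet> \<sigma>) =\<^sub>\<beta> M[x ::= N] \<bullet> \<sigma>"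
    unfolding sbst_usubst by (rule bconv.c_alpha[OF alpha_sbst_scomp_Var])
  finally show ?case .
next
  case (b_lam_body M M' x A)
  define u where "u = X \<sigma> (removeAll x (fv M))"
  have "Lam x A M \<bullet> \<sigma> =\<^sub>\<beta> Lam u (A \<bullet> \<sigma>) (M' \<bullet> \<sigma>(x := Var u))"
    by (simp add: u_def Let_def bconv_Lam bconv.c_refl b_lam_body.IH)
  also have "\<dots> =\<^sub>\<beta> Lam x A M' \<bullet> \<sigma>"
    using bconv.c_alpha[OF alpha_Lam_rename[OF
        fresh_binder_mono[OF fresh_binder_X[of \<sigma> x M] beta_fv[OF b_lam_body.hyps]]
        fresh_binder_X[of \<sigma> x M']]]
    by (simp add: u_def Let_def)
  finally show ?case .
next
  case (b_pi_body M M' x A)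
  define u where "u = X \<sigma> (removeAll x (fv M))"
  have "Pi x A M \<bullet> \<sigma> =\<^sub>\<beta> Pi u (A \<bullet> \<sigma>) (M' \<bullet> \<sigma>(x := Var u))"
    by (simp add: u_def Let_def bconv_Pi bconv.c_refl b_pi_body.IH)
  also have "\<dots> =\<^sub>\<beta> Pi x A M' \<bullet> \<sigma>"
    using bconv.c_alpha[OF alpha_Pi_rename[OF
        fresh_binder_mono[OF fresh_binder_X[of \<sigma> x M] beta_fv[OF b_pi_body.hyps]]
        fresh_binder_X[of \<sigma> x M']]]
    by (simp add: u_def Let_def)
  finally show ?case .
qed (simp_all add: Let_def bconv_Lam bconv_Pi bconv_App bconv.c_refl)

lemma bconv_sbst: "A =\<^sub>\<beta> B \<Longrightarrow> A \<bullet> \<sigma> =\<^sub>\<beta> B \<bullet> \<sigma>"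
  by (induction rule: bconv.induct) (auto intro: bconv.intros beta_sbst simp: alpha_sbst)

end

section \<open>Typing\<close>

locale pts = naming enc dec chi
  for enc :: "'v \<Rightarrow> nat" and dec :: "nat \<Rightarrow> 'v" and chi :: "nat list \<Rightarrow> nat" +
  fixes ax :: "'c \<Rightarrow> 'c \<Rightarrow> bool" and rl :: "'c \<Rightarrow> 'c \<Rightarrow> 'c \<Rightarrow> bool"
begin

abbreviation wf_ctx :: "('c, 'v) ctx \<Rightarrow> bool" where
  "wf_ctx \<equiv> ctx_ok enc dec chi ax rl"

abbreviation has_typ_syntax :: "('c, 'v) ctx \<Rightarrow> ('c, 'v) trm \<Rightarrow> ('c, 'v) trm \<Rightarrow> bool"
    ("_ \<turnstile> _ : _" [50, 50, 50] 50) where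
  "\<Gamma> \<turnstile> M : A \<equiv> has_typ enc dec chi ax rl \<Gamma> M A"

abbreviation wt_subst_syntax :: "('v \<Rightarrow> ('c, 'v) trm) \<Rightarrow> ('c, 'v) ctx \<Rightarrow> ('c, 'v) ctx \<Rightarrow> bool"
    ("_ : _ \<rightharpoonup> _" [50, 50, 50] 50) where
  "\<sigma> : \<Gamma> \<rightharpoonup> \<Delta> \<equiv> wt_subst enc dec chi ax rl \<sigma> \<Gamma> \<Delta>"

lemmas typing_intros =
  ctx_ok_has_typ.intros[where enc = enc and dec = dec and chi = chi and ax = ax and rl = rl]

lemmas wf_ctx_cons = typing_intros(2) and typ_sort = typing_intros(3)
  and typ_var = typing_intros(4) and typ_prod = typing_intros(5) and typ_abs = typing_intros(6)
  and typ_app = typing_intros(7) and typ_conv = typing_intros(8)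

lemmas has_typ_induct[consumes 1, case_names sort var prod abs app conv] =
  ctx_ok_has_typ.inducts(2)[of enc dec chi ax rl, where ?P1.0 = "\<lambda>_. True",
    OF _ TrueI TrueI, unfolded True_implies_equals]

lemma has_typ_wf_ctx: "\<Gamma> \<turnstile> M : A \<Longrightarrow> wf_ctx \<Gamma>"
  by (induction rule: has_typ_induct) auto

lemma has_typ_transfer:
  assumes "\<Gamma> \<turnstile> M : A" and "R \<Gamma> \<Gamma>'"
    and R_wf: "\<And>\<Gamma> \<Gamma>'. R \<Gamma> \<Gamma>' \<Longrightarrow> wf_ctx \<Gamma>'"
    and R_dom: "\<And>\<Gamma> \<Gamma>'. R \<Gamma> \<Gamma>' \<Longrightarrow> set (map fst \<Gamma>) \<subseteq> set (map fst \<Gamma>')"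
    and R_var: "\<And>\<Gamma> \<Gamma>' x C. R \<Gamma> \<Gamma>' \<Longrightarrow> (x, C) \<in> set \<Gamma> \<Longrightarrow> \<Gamma>' \<turnstile> Var x : C"
    and R_cons: "\<And>\<Gamma> \<Gamma>' y C s. R \<Gamma> \<Gamma>' \<Longrightarrow> \<Gamma>' \<turnstile> C : Cst s \<Longrightarrow> y \<notin> set (map fst \<Gamma>') \<Longrightarrow>
      R ((y, C) # \<Gamma>) ((y, C) # \<Gamma>')"
  shows "\<Gamma>' \<turnstile> M : A"
  using assms(1,2)
proof (induction arbitrary: \<Gamma>' rule: has_typ_induct)
  case (sort \<Gamma> s1 s2)
  then show ?case by (blast intro: typ_sort R_wf)
next
  case (var \<Gamma> x A)
  then show ?case by (blast intro: R_var)
next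
  case (prod s1 s2 s3 \<Gamma> A B x)
  then have A: "\<Gamma>' \<turnstile> A : Cst s1" by blast
  show ?case
  proof (rule typ_prod[OF prod(1) A], intro allI impI)
    fix y assume "y \<notin> set (map fst \<Gamma>')"
    with prod R_dom R_cons[OF prod.prems A] show "(y, A) # \<Gamma>' \<turnstile> B[x ::= Var y] : Cst s2"
      by blast
  qed
next
  case (abs s1 s2 s3 \<Gamma> A B y M x)
  then have A: "\<Gamma>' \<turnstile> A : Cst s1" by blast
  show ?case
  proof (rule typ_abs[OF abs(1) A]; intro allI impI)
    fix z assume "z \<notin> set (map fst \<Gamma>')"
    with abs R_dom R_cons[OF abs.prems A]
    show "(z, A) # \<Gamma>' \<turnstile> B[y ::= Var z] : Cst s2"
      and "(z, A) # \<Gamma>' \<turnstile> M[x ::= Var z] : B[y ::= Var z]"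
      by blast+
  qed
qed (blast intro: typ_app typ_conv)+

lemma has_typ_weaken: "\<Gamma> \<turnstile> M : A \<Longrightarrow> wf_ctx \<Gamma>' \<Longrightarrow> set \<Gamma> \<subseteq> set \<Gamma>' \<Longrightarrow> \<Gamma>' \<turnstile> M : A"
  by (rule has_typ_transfer[where R = "\<lambda>\<Gamma> \<Gamma>'. wf_ctx \<Gamma>' \<and> set \<Gamma> \<subseteq> set \<Gamma>'"])
    (auto intro: typ_var wf_ctx_cons)

lemma has_typ_weaken_cons: "\<Gamma> \<turnstile> M : A \<Longrightarrow> wf_ctx ((y, C) # \<Gamma>) \<Longrightarrow> (y, C) # \<Gamma> \<turnstile> M : A"
  by (erule has_typ_weaken) auto

lemma has_typ_ctx_conv:
  assumes "(y, A) # \<Gamma> \<turnstile> M : C" and "\<Gamma> \<turnstile> A : Cst s" and "\<Gamma> \<turnstile> A' : Cst s'"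
    and "A' =\<^sub>\<beta> A" and "y \<notin> set (map fst \<Gamma>)"
  shows "(y, A') # \<Gamma> \<turnstile> M : C"
proof -
  let ?R = "\<lambda>\<Gamma> \<Gamma>'. wf_ctx \<Gamma>' \<and> set (map fst \<Gamma>) \<subseteq> set (map fst \<Gamma>') \<and>
    (\<forall>x C. (x, C) \<in> set \<Gamma> \<longrightarrow> \<Gamma>' \<turnstile> Var x : C)"
  have wf: "wf_ctx ((y, A') # \<Gamma>)"
    using assms(3,5) by (blast intro: wf_ctx_cons has_typ_wf_ctx)
  have "(y, A') # \<Gamma> \<turnstile> Var y : A"
    using typ_var[OF wf] has_typ_weaken_cons[OF assms(2) wf] assms(4)
    by (auto intro: typ_conv)
  with wf have "?R ((y, A) # \<Gamma>) ((y, A') # \<Gamma>)"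
    by (auto intro: typ_var)
  moreover have "?R ((z, D) # \<Delta>) ((z, D) # \<Delta>')"
    if R: "?R \<Delta> \<Delta>'" and D: "\<Delta>' \<turnstile> D : Cst t" and z: "z \<notin> set (map fst \<Delta>')" for \<Delta> \<Delta>' z D t
  proof -
    from R D z have wf': "wf_ctx ((z, D) # \<Delta>')" by (blast intro: wf_ctx_cons)
    with R show ?thesis by (auto intro: typ_var[OF wf'] has_typ_weaken_cons)
  qed
  ultimately show ?thesis
    by (intro has_typ_transfer[OF assms(1), where R = ?R]) blast+
qed

inductive_cases alpha_CstE: "Cst k =\<^sub>\<alpha> P"
inductive_cases alpha_VarE: "Var x =\<^sub>\<alpha> P"
inductive_cases alpha_AppE: "App M N =\<^sub>\<alpha> P"

lemma alpha_LamE: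
  assumes "Lam x A M =\<^sub>\<alpha> P"
  obtains x' A' M' where "P = Lam x' A' M'" and "A =\<^sub>\<alpha> A'" and "\<And>N. M[x ::= N] = M'[x' ::= N]"
  using assms
proof cases
  case (a_lam A' v x' M')
  then show ?thesis
    using that[of x' A' M'] usubst_Var_sbst_eq[of M x v M' x' Var] by (simp add: usubst_def)
qed

lemma alpha_PiE:
  assumes "Pi x A M =\<^sub>\<alpha> P"
  obtains x' A' M' where "P = Pi x' A' M'" and "A =\<^sub>\<alpha> A'" and "\<And>N. M[x ::= N] = M'[x' ::= N]"
  using assms
proof cases
  case (a_pi A' v x' M')
  then show ?thesis
    using that[of x' A' M'] usubst_Var_sbst_eq[of M x v M' x' Var] by (simp add: usubst_def)
qed

text \<open>\<alpha>-equivalent binders have identical instances M[x ::= N], so only their domains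
need context conversion.\<close>

lemma has_typ_alpha: "\<Gamma> \<turnstile> P : C \<Longrightarrow> P =\<^sub>\<alpha> P' \<Longrightarrow> \<Gamma> \<turnstile> P' : C"
proof (induction arbitrary: P' rule: has_typ_induct)
  case (sort \<Gamma> s1 s2)
  then show ?case by (auto elim: alpha_CstE intro: typ_sort)
next
  case (var \<Gamma> x A)
  then show ?case by (auto elim: alpha_VarE intro: typ_var)
next
  case (prod s1 s2 s3 \<Gamma> A B x)
  from prod.prems obtain x' A' B' where P': "P' = Pi x' A' B'" and "A =\<^sub>\<alpha> A'"
    and B': "\<And>N. B[x ::= N] = B'[x' ::= N]" by (rule alpha_PiE) blast
  then have A': "\<Gamma> \<turnstile> A' : Cst s1" and "A' =\<^sub>\<beta> A"
    using prod.IH by (auto intro: bconv.c_alpha alpha_sym)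
  have "(y, A') # \<Gamma> \<turnstile> B'[x' ::= Var y] : Cst s2" if "y \<notin> set (map fst \<Gamma>)" for y
    using prod that A' \<open>A' =\<^sub>\<beta> A\<close> by (metis B' has_typ_ctx_conv)
  with A' show ?case
    unfolding P' by (blast intro: typ_prod[OF prod(1)])
next
  case (abs s1 s2 s3 \<Gamma> A B y M x)
  from abs.prems obtain x' A' M' where P': "P' = Lam x' A' M'" and "A =\<^sub>\<alpha> A'"
    and M': "\<And>N. M[x ::= N] = M'[x' ::= N]" by (rule alpha_LamE) blast
  then have A': "\<Gamma> \<turnstile> A' : Cst s1" and conv: "A' =\<^sub>\<beta> A"
    using abs.IH by (auto intro: bconv.c_alpha alpha_sym)
  have "(z, A') # \<Gamma> \<turnstile> B[y ::= Var z] : Cst s2"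
    and "(z, A') # \<Gamma> \<turnstile> M'[x' ::= Var z] : B[y ::= Var z]"
    if "z \<notin> set (map fst \<Gamma>)" for z
    using abs that A' conv by (metis M' has_typ_ctx_conv)+
  with A' have "\<Gamma> \<turnstile> Lam x' A' M' : Pi y A' B"
    by (blast intro: typ_abs[OF abs(1)])
  moreover have "\<Gamma> \<turnstile> Pi y A B : Cst s3"
    using abs by (blast intro: typ_prod[OF abs(1)])
  ultimately show ?case
    unfolding P' by (blast intro: typ_conv bconv_Pi conv bconv.c_refl)
next
  case (app \<Gamma> M x A B N s)
  from app.prems obtain M' N' where P': "P' = App M' N'" and "M =\<^sub>\<alpha> M'" and "N =\<^sub>\<alpha> N'"
    by (rule alpha_AppE)
  moreover have B: "B[x ::= N] =\<^sub>\<alpha> B[x ::= N']"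
    unfolding usubst_def using \<open>N =\<^sub>\<alpha> N'\<close> by (intro alpha_sbst_cong) (simp add: alpha_refl)
  ultimately have "\<Gamma> \<turnstile> App M' N' : B[x ::= N']"
    using app.IH by (blast intro: typ_app)
  then show ?case
    unfolding P' using app B by (blast intro: typ_conv bconv.c_alpha alpha_sym)
next
  case (conv \<Gamma> M A B s)
  then show ?case by (blast intro: typ_conv)
qed

lemma has_typ_sbst_Var: "\<Gamma> \<turnstile> M : A \<Longrightarrow> \<Gamma> \<turnstile> M \<bullet> Var : A"
  using has_typ_alpha alpha_sbst_Var by blast

lemma wt_subst_extend:
  assumes wt: "\<sigma> : \<Gamma> \<rightharpoonup> \<Delta>" and wf: "wf_ctx ((z, A \<bullet> \<sigma>) # \<Delta>)" and "finite F"
  obtains w where "w \<notin> F" and "w \<notin> set (map fst \<Gamma>)"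
    and "\<sigma>(w := Var z) : (w, A) # \<Gamma> \<rightharpoonup> (z, A \<bullet> \<sigma>) # \<Delta>"
proof -
  let ?avoid = "F \<union> set (map fst \<Gamma> @ fv A @ concat (map (fv \<circ> snd) \<Gamma>))"
  have "finite ?avoid" using \<open>finite F\<close> by simp
  then obtain w where w: "w \<notin> ?avoid" using ex_fresh by blast
  have "\<sigma>(w := Var z) : (w, A) # \<Gamma> \<rightharpoonup> (z, A \<bullet> \<sigma>) # \<Delta>"
    unfolding wt_subst_def
  proof (intro allI impI)
    fix v C assume "(v, C) \<in> set ((w, A) # \<Gamma>)"
    then consider "v = w" "C = A" | "(v, C) \<in> set \<Gamma>" by auto
    then show "(z, A \<bullet> \<sigma>) # \<Delta> \<turnstile> (\<sigma>(w := Var z)) v : C \<bullet> \<sigma>(w := Var z)"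
    proof cases
      case 1
      have "A \<bullet> \<sigma>(w := Var z) = A \<bullet> \<sigma>" using w by (intro sbst_cong) auto
      with 1 show ?thesis using typ_var[OF wf] by simp
    next
      case 2
      with w have "v \<noteq> w" and "C \<bullet> \<sigma>(w := Var z) = C \<bullet> \<sigma>"
        by (force, intro sbst_cong, force)
      moreover have "\<Delta> \<turnstile> \<sigma> v : C \<bullet> \<sigma>" using wt 2 unfolding wt_subst_def by blast
      ultimately show ?thesis using has_typ_weaken_cons[OF _ wf] by simp
    qed
  qed
  with w show ?thesis by (intro that) auto
qed

text \<open>The premises of (prod) and (abs) are instantiated at a name w fresh for the bodies, on
which \<sigma>(w := Var z) acts as \<sigma>(x := Var z) does on M.\<close>

lemma has_typ_body_sbst:
  assumes IH: "\<And>w \<sigma>' \<Delta>'. w \<notin> set (map fst \<Gamma>) \<Longrightarrow> \<sigma>' : (w, A) # \<Gamma> \<rightharpoonup> \<Delta>' \<Longrightarrow> wf_ctx \<Delta>' \<Longrightarrow>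
      \<Delta>' \<turnstile> M[x ::= Var w] \<bullet> \<sigma>' : B[y ::= Var w] \<bullet> \<sigma>'"
    and wt: "\<sigma> : \<Gamma> \<rightharpoonup> \<Delta>" and wf: "wf_ctx ((z, A \<bullet> \<sigma>) # \<Delta>)"
  shows "(z, A \<bullet> \<sigma>) # \<Delta> \<turnstile> M \<bullet> \<sigma>(x := Var z) : B \<bullet> \<sigma>(y := Var z)"
proof -
  obtain w where w: "w \<notin> set (fv M @ fv B)" "w \<notin> set (map fst \<Gamma>)"
    and "\<sigma>(w := Var z) : (w, A) # \<Gamma> \<rightharpoonup> (z, A \<bullet> \<sigma>) # \<Delta>"
    by (rule wt_subst_extend[OF wt wf finite_set])
  with IH wf have "(z, A \<bullet> \<sigma>) # \<Delta> \<turnstile> M[x ::= Var w] \<bullet> \<sigma>(w := Var z) : B[y ::= Var w] \<bullet> \<sigma>(w := Var z)"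
    by blast
  with w show ?thesis by (simp add: usubst_Var_sbst)
qed

text \<open>The binder chosen by X is renamed to z at the price of the \<alpha>-variant (-) \<bullet> Var.\<close>

lemma has_typ_Pi_sbst:
  assumes "rl s1 s2 s3" and A: "\<Delta> \<turnstile> A \<bullet> \<sigma> : Cst s1"
    and B: "\<And>z. z \<notin> set (map fst \<Delta>) \<Longrightarrow> (z, A \<bullet> \<sigma>) # \<Delta> \<turnstile> B \<bullet> \<sigma>(x := Var z) : Cst s2"
  shows "\<Delta> \<turnstile> Pi x A B \<bullet> \<sigma> : Cst s3"
proof -
  define u where "u = X \<sigma> (removeAll x (fv B))"
  have "(z, A \<bullet> \<sigma>) # \<Delta> \<turnstile> (B \<bullet> \<sigma>(x := Var u))[u ::= Var z] : Cst s2"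
    if "z \<notin> set (map fst \<Delta>)" for z
    unfolding u_def sbst_upd_rename[OF fresh_binder_X] using B[OF that] by (rule has_typ_sbst_Var)
  with A show ?thesis by (simp add: Let_def u_def[symmetric] typ_prod[OF assms(1)])
qed

lemma has_typ_Lam_sbst:
  assumes "rl s1 s2 s3" and A: "\<Delta> \<turnstile> A \<bullet> \<sigma> : Cst s1"
    and B: "\<And>z. z \<notin> set (map fst \<Delta>) \<Longrightarrow> (z, A \<bullet> \<sigma>) # \<Delta> \<turnstile> B \<bullet> \<sigma>(y := Var z) : Cst s2"
    and M: "\<And>z. z \<notin> set (map fst \<Delta>) \<Longrightarrow>
      (z, A \<bullet> \<sigma>) # \<Delta> \<turnstile> M \<bullet> \<sigma>(x := Var z) : B \<bullet> \<sigma>(y := Var z)"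
  shows "\<Delta> \<turnstile> Lam x A M \<bullet> \<sigma> : Pi y A B \<bullet> \<sigma>"
proof -
  define u where "u = X \<sigma> (removeAll x (fv M))"
  define v where "v = X \<sigma> (removeAll y (fv B))"
  have "(z, A \<bullet> \<sigma>) # \<Delta> \<turnstile> (B \<bullet> \<sigma>(y := Var v))[v ::= Var z] : Cst s2"
    and "(z, A \<bullet> \<sigma>) # \<Delta> \<turnstile> (M \<bullet> \<sigma>(x := Var u))[u ::= Var z] : (B \<bullet> \<sigma>(y := Var v))[v ::= Var z]"
    if z: "z \<notin> set (map fst \<Delta>)" for z
    unfolding u_def v_def sbst_upd_rename[OF fresh_binder_X]
    using has_typ_sbst_Var[OF B[OF z]] has_typ_sbst_Var[OF M[OF z]]
    by (auto intro: typ_conv bconv.c_alpha alpha_sbst_Var)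
  with A show ?thesis
    by (simp add: Let_def u_def[symmetric] v_def[symmetric] typ_abs[OF assms(1)])
qed

lemma has_typ_App_sbst:
  assumes M: "\<Delta> \<turnstile> M \<bullet> \<sigma> : Pi x A B \<bullet> \<sigma>" and N: "\<Delta> \<turnstile> N \<bullet> \<sigma> : A \<bullet> \<sigma>"
    and B: "\<Delta> \<turnstile> B[x ::= N] \<bullet> \<sigma> : Cst s"
  shows "\<Delta> \<turnstile> App M N \<bullet> \<sigma> : B[x ::= N] \<bullet> \<sigma>"
proof -
  define u where "u = X \<sigma> (removeAll x (fv B))"
  have alpha: "(B \<bullet> \<sigma>(x := Var u))[u ::= N \<bullet> \<sigma>] =\<^sub>\<alpha> B[x ::= N] \<bullet> \<sigma>"
    unfolding u_def sbst_upd_usubst[OF fresh_binder_X] sbst_usubst by (rule alpha_sbst_scomp_Var)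
  from M have "\<Delta> \<turnstile> M \<bullet> \<sigma> : Pi u (A \<bullet> \<sigma>) (B \<bullet> \<sigma>(x := Var u))"
    by (simp add: u_def Let_def)
  then have "\<Delta> \<turnstile> App (M \<bullet> \<sigma>) (N \<bullet> \<sigma>) : (B \<bullet> \<sigma>(x := Var u))[u ::= N \<bullet> \<sigma>]"
    using typ_app N has_typ_alpha[OF B alpha_sym[OF alpha]] by blast
  then show ?thesis using typ_conv[OF _ bconv.c_alpha[OF alpha] B] by simp
qed

lemma has_typ_sbst:
  "\<Gamma> \<turnstile> M : A \<Longrightarrow> \<sigma> : \<Gamma> \<rightharpoonup> \<Delta> \<Longrightarrow> wf_ctx \<Delta> \<Longrightarrow> \<Delta> \<turnstile> M \<bullet> \<sigma> : A \<bullet> \<sigma>"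
proof (induction arbitrary: \<sigma> \<Delta> rule: has_typ_induct)
  case (sort \<Gamma> s1 s2)
  then show ?case by (simp add: typ_sort)
next
  case (var \<Gamma> x A)
  then show ?case by (simp add: wt_subst_def)
next
  case (prod s1 s2 s3 \<Gamma> A B x)
  have A: "\<Delta> \<turnstile> A \<bullet> \<sigma> : Cst s1" using prod by fastforce
  have "(z, A \<bullet> \<sigma>) # \<Delta> \<turnstile> B \<bullet> \<sigma>(x := Var z) : Cst s2 \<bullet> \<sigma>(x := Var z)"
    if "z \<notin> set (map fst \<Delta>)" for z
    using prod.IH(2) wf_ctx_cons[OF prod.prems(2) A that]
    by (intro has_typ_body_sbst[OF _ prod.prems(1)]) (auto simp: usubst_def)
  then have "\<Delta> \<turnstile> Pi x A B \<bullet> \<sigma> : Cst s3" by (intro has_typ_Pi_sbst[OF prod(1) A]) simp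
  then show ?case by simp
next
  case (abs s1 s2 s3 \<Gamma> A B y M x)
  have A: "\<Delta> \<turnstile> A \<bullet> \<sigma> : Cst s1" using abs by fastforce
  have "(z, A \<bullet> \<sigma>) # \<Delta> \<turnstile> B \<bullet> \<sigma>(y := Var z) : Cst s2 \<bullet> \<sigma>(y := Var z)"
    and "(z, A \<bullet> \<sigma>) # \<Delta> \<turnstile> M \<bullet> \<sigma>(x := Var z) : B \<bullet> \<sigma>(y := Var z)"
    if "z \<notin> set (map fst \<Delta>)" for z
    using abs.IH(2,3) wf_ctx_cons[OF abs.prems(2) A that]
    by (intro has_typ_body_sbst[OF _ abs.prems(1)]; auto simp: usubst_def)+
  then show ?case by (intro has_typ_Lam_sbst[OF abs(1) A]) simp_all
next
  case (app \<Gamma> M x A B N s)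
  then show ?case by (intro has_typ_App_sbst) fastforce+
next
  case (conv \<Gamma> M A B s)
  then show ?case by (fastforce intro: typ_conv bconv_sbst)
qed

end

theorem mainTheorem16:
  fixes enc :: "'v \<Rightarrow> nat" and dec :: "nat \<Rightarrow> 'v" and chi :: "nat list \<Rightarrow> nat"
    and ax :: "'c \<Rightarrow> 'c \<Rightarrow> bool" and rl :: "'c \<Rightarrow> 'c \<Rightarrow> 'c \<Rightarrow> bool"
    and \<Gamma> \<Delta> :: "('c, 'v) ctx" and M A :: "('c, 'v) trm" and \<sigma> :: "'v \<Rightarrow> ('c, 'v) trm"
  assumes enc_dec: "\<And>n. enc (dec n) = n"
    and chi_fresh: "\<And>ns. chi ns \<notin> set ns"
    and "wt_subst enc dec chi ax rl \<sigma> \<Gamma> \<Delta>"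
    and "ctx_ok enc dec chi ax rl \<Delta>"
    and "has_typ enc dec chi ax rl \<Gamma> M A"
  shows "has_typ enc dec chi ax rl \<Delta> (sbst enc dec chi M \<sigma>) (sbst enc dec chi A \<sigma>)"
proof -
  interpret pts enc dec chi ax rl
    using enc_dec chi_fresh by unfold_locales
  show ?thesis
    using has_typ_sbst assms(3-5) by blast
qed

end
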